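(* Let $g:\mathbb{R}^m\to\overline{\mathbb{R}}$ be a polyhedral function and $(\bar z,\bar\lambda)\in\mathrm{gph}\,\partial g$. The following are equivalent: (a) there is a neighborhood $O$ of $(\bar z,\bar\lambda)$ such that for every $(z,\lambda)\in O\cap\mathrm{gph}\,\partial g$, $g$ is strictly twice epi-differentiable at $z$ for $\lambda$; (b) $\bar\lambda\in\mathrm{ri}\,\partial g(\bar z)$.
   Context: A proper function $g:\mathbb{R}^m\to\overline{\mathbb{R}}$ is polyhedral if its epigraph is a polyhedral convex set; $\partial g$ is the convex-analysis subdifferential; $\mathrm{ri}$ is relative interior. For $f:\mathbb{R}^n\to\overline{\mathbb{R}}$, $f(x)$ finite, $v\in\partial f(x)$, $t>0$, set $\Delta_t^2 f(x,v)(w)=\frac{f(x+tw)-f(x)-t\langle v,w\rangle}{\frac12 t^2}$. A family of functions epi-converges to a function if their epigraphs converge to its epigraph in the Painlevé–Kuratowski sense. $f$ is strictly twice epi-differentiable at $\bar x$ for $\bar v\in\partial f(\bar x)$ if the functions $\Delta_t^2 f(x,v)$ epi-converge to some function as $t\searrow 0$ and $(x,v)\to(\bar x,\bar v)$ with $(x,v)\in\mathrm{gph}\,\partial f$ and $f(x)\to f(\bar x)$. *)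

theory Defs
  imports "HOL-Analysis.Analysis"
begin

definition epi :: "('a \<Rightarrow> ereal) \<Rightarrow> ('a \<times> real) set" where
  "epi f = {(x, r). f x \<le> ereal r}"

definition proper_fun :: "('a \<Rightarrow> ereal) \<Rightarrow> bool" where
  "proper_fun f \<longleftrightarrow> (\<forall>x. f x \<noteq> -\<infinity>) \<and> (\<exists>x. f x \<noteq> \<infinity>)"

definition polyhedral_fun :: "('a::euclidean_space \<Rightarrow> ereal) \<Rightarrow> bool" where
  "polyhedral_fun g \<longleftrightarrow> proper_fun g \<and> polyhedron (epi g)"

definition subdiff :: "('a::real_inner \<Rightarrow> ereal) \<Rightarrow> 'a \<Rightarrow> 'a set" where
  "subdiff f x = {v. \<bar>f x\<bar> \<noteq> \<infinity> \<and> (\<forall>y. f x + ereal (v \<bullet> (y - x)) \<le> f y)}"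

definition gph_subdiff :: "('a::real_inner \<Rightarrow> ereal) \<Rightarrow> ('a \<times> 'a) set" where
  "gph_subdiff f = {(x, v). v \<in> subdiff f x}"

definition PK_liminf :: "('p \<Rightarrow> 'b::metric_space set) \<Rightarrow> 'p filter \<Rightarrow> 'b set" where
  "PK_liminf C F = {y. \<forall>e>0. eventually (\<lambda>p. \<exists>z\<in>C p. dist z y < e) F}"

definition PK_limsup :: "('p \<Rightarrow> 'b::metric_space set) \<Rightarrow> 'p filter \<Rightarrow> 'b set" where
  "PK_limsup C F = {y. \<forall>e>0. frequently (\<lambda>p. \<exists>z\<in>C p. dist z y < e) F}"

definition PK_converges :: "('p \<Rightarrow> 'b::metric_space set) \<Rightarrow> 'p filter \<Rightarrow> 'b set \<Rightarrow> bool" where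
  "PK_converges C F S \<longleftrightarrow> PK_liminf C F = S \<and> PK_limsup C F = S"

definition epi_converges :: "('p \<Rightarrow> 'a::metric_space \<Rightarrow> ereal) \<Rightarrow> 'p filter \<Rightarrow> ('a \<Rightarrow> ereal) \<Rightarrow> bool" where
  "epi_converges h F h0 \<longleftrightarrow> PK_converges (\<lambda>p. epi (h p)) F (epi h0)"

definition second_dq :: "('a::real_inner \<Rightarrow> ereal) \<Rightarrow> 'a \<Rightarrow> 'a \<Rightarrow> real \<Rightarrow> 'a \<Rightarrow> ereal" where
  "second_dq f x v t w = (f (x + t *\<^sub>R w) - f x - ereal (t * (v \<bullet> w))) / ereal (t\<^sup>2 / 2)"

text \<open>Filter: (x,v) \<rightarrow> (xb,vb) with (x,v) in gph of subdiff f and f x \<rightarrow> f xb.\<close>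
definition attentive_filter :: "('a::real_inner \<Rightarrow> ereal) \<Rightarrow> 'a \<Rightarrow> 'a \<Rightarrow> ('a \<times> 'a) filter" where
  "attentive_filter f xb vb =
     inf (inf (nhds (xb, vb)) (principal (gph_subdiff f)))
         (filtercomap (\<lambda>(x, v). f x) (nhds (f xb)))"

definition strictly_twice_epi_diff :: "('a::euclidean_space \<Rightarrow> ereal) \<Rightarrow> 'a \<Rightarrow> 'a \<Rightarrow> bool" where
  "strictly_twice_epi_diff f xb vb \<longleftrightarrow>
     (\<exists>h. epi_converges (\<lambda>(t, x, v). second_dq f x v t)
            (at_right 0 \<times>\<^sub>F attentive_filter f xb vb) h)"

end

theory Submission
  imports Defs
begin

(* A polyhedral g is a maximum of finitely many affine functions on a polyhedral domain. Near zb it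
   therefore equals g zb + max {p \<bullet> u | p \<in> P} on the cone {u. \<forall>a\<in>A. a \<bullet> u \<le> 0}, where P and A
   are the gradients of the active pieces and the normals of the active constraints; the
   subdifferential C at zb contains P and is stable under adding elements of A.

   If lb lies in the relative interior of C, every (z, l) in the graph of the subdifferential near
   (zb, lb) has C contained in the subdifferential at z, and g is affine with slope lb on z + S near z,
   S being the orthogonal complement of C - lb. So the second-order difference quotients vanish along
   S, while for w outside S a subgradient l + e with e \<bullet> w > 0 makes them grow like 1/t: they
   epi-converge to the indicator of S.

   If lb is not in the relative interior, separating lb - c (for a suitable c in C) from the cone
   generated by P - lb and A gives a direction u along which the quotients at (zb, lb) itself are
   nonpositive, whereas along (zb, lb - \<theta> (lb - c)) with t proportional to \<theta> they exceed 1 near u.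
   Hence (u, 0) is in the outer but not in the inner epi-limit. *)

section \<open>Subgradients and second-order difference quotients\<close>

lemma subdiff_finite:
  assumes "v \<in> subdiff f x"
  obtains fx where "f x = ereal fx"
  using assms by (cases "f x") (auto simp: subdiff_def)

lemma subdiff_iff:
  assumes "f x = ereal fx"
  shows "v \<in> subdiff f x \<longleftrightarrow> (\<forall>y. ereal (fx + v \<bullet> (y - x)) \<le> f y)"
  using assms by (simp add: subdiff_def)

lemma convex_subdiff: "convex (subdiff f x)"
  unfolding convex_alt
proof (intro ballI allI impI)
  fix v v' and s :: real
  assume v: "v \<in> subdiff f x" and v': "v' \<in> subdiff f x" and s: "0 \<le> s \<and> s \<le> 1"
  obtain fx where fx: "f x = ereal fx"
    using v by (rule subdiff_finite)
  have v_le: "ereal (fx + v \<bullet> (y - x)) \<le> f y" and v'_le: "ereal (fx + v' \<bullet> (y - x)) \<le> f y" for y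
    using v v' subdiff_iff[of f x, OF fx] by blast+
  show "(1 - s) *\<^sub>R v + s *\<^sub>R v' \<in> subdiff f x"
    unfolding subdiff_iff[of f x, OF fx]
  proof
    fix y
    show "ereal (fx + ((1 - s) *\<^sub>R v + s *\<^sub>R v') \<bullet> (y - x)) \<le> f y"
    proof (cases "f y")
      case (real fy)
      have "fx + v \<bullet> (y - x) \<le> fy" "fx + v' \<bullet> (y - x) \<le> fy"
        using v_le[of y] v'_le[of y] real by simp_all
      then have "(1 - s) * (fx + v \<bullet> (y - x)) + s * (fx + v' \<bullet> (y - x)) \<le> (1 - s) * fy + s * fy"
        using s real by (intro add_mono mult_left_mono) auto
      then show ?thesis
        using real by (simp add: inner_add_left algebra_simps)
    next
      case MInf
      then show ?thesis
        using v_le[of y] by simp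
    qed simp
  qed
qed

lemma mem_subdiff_at_contact_point:
  assumes "c \<in> subdiff f x0" "f x0 = ereal a" "f x = ereal (a + c \<bullet> (x - x0))"
  shows "c \<in> subdiff f x"
  unfolding subdiff_iff[of f x, OF assms(3)]
proof
  fix y
  have "ereal (a + c \<bullet> (x - x0) + c \<bullet> (y - x)) = ereal (a + c \<bullet> (y - x0))"
    by (simp add: inner_diff_right)
  also have "\<dots> \<le> f y"
    using assms(1) subdiff_iff[of f x0, OF assms(2)] by blast
  finally show "ereal (a + c \<bullet> (x - x0) + c \<bullet> (y - x)) \<le> f y" .
qed

lemma second_dq_le_iff:
  assumes "g x = ereal gx" "t > 0"
  shows "second_dq g x v t w \<le> ereal r \<longleftrightarrow>
    g (x + t *\<^sub>R w) \<le> ereal (gx + t * (v \<bullet> w) + r * (t\<^sup>2 / 2))"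
proof -
  have t2: "t\<^sup>2 / 2 > 0"
    using assms(2) by simp
  show ?thesis
  proof (cases "g (x + t *\<^sub>R w)")
    case (real y)
    then have "second_dq g x v t w = ereal ((y - gx - t * (v \<bullet> w)) / (t\<^sup>2 / 2))"
      using assms(1) t2 by (simp add: second_dq_def)
    moreover have "(y - gx - t * (v \<bullet> w)) / (t\<^sup>2 / 2) \<le> r \<longleftrightarrow> y - gx - t * (v \<bullet> w) \<le> r * (t\<^sup>2 / 2)"
      by (rule pos_divide_le_eq[OF t2])
    ultimately show ?thesis
      using real by (simp only: ereal_less_eq(3)) linarith
  next
    case PInf
    then have "second_dq g x v t w = \<infinity>"
      using assms(1) t2 by (simp add: second_dq_def ereal_divide_Infty)
    then show ?thesis
      using PInf by simp
  next
    case MInf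
    then have "second_dq g x v t w = -\<infinity>"
      using assms(1) t2 by (simp add: second_dq_def ereal_divide_Infty)
    then show ?thesis
      using MInf by simp
  qed
qed

lemma second_dq_ge_subgradient:
  assumes "v' \<in> subdiff g x" "t > 0"
  shows "ereal (2 * ((v' - v) \<bullet> w) / t) \<le> second_dq g x v t w"
proof (rule ereal_le_real)
  obtain gx where gx: "g x = ereal gx"
    using assms(1) by (rule subdiff_finite)
  fix r assume "second_dq g x v t w \<le> ereal r"
  then have "g (x + t *\<^sub>R w) \<le> ereal (gx + t * (v \<bullet> w) + r * (t\<^sup>2 / 2))"
    using second_dq_le_iff[of g x, OF gx assms(2)] by blast
  moreover have "ereal (gx + v' \<bullet> ((x + t *\<^sub>R w) - x)) \<le> g (x + t *\<^sub>R w)"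
    using assms(1) subdiff_iff[of g x, OF gx] by blast
  ultimately have "ereal (gx + v' \<bullet> ((x + t *\<^sub>R w) - x)) \<le> ereal (gx + t * (v \<bullet> w) + r * (t\<^sup>2 / 2))"
    by (rule order.trans[rotated])
  then have "gx + t * (v' \<bullet> w) \<le> gx + t * (v \<bullet> w) + r * (t\<^sup>2 / 2)"
    by simp
  then have "t * ((v' - v) \<bullet> w) \<le> t * (r * t / 2)"
    by (simp add: inner_diff_left power2_eq_square algebra_simps)
  then have "2 * ((v' - v) \<bullet> w) \<le> r * t"
    using assms(2) by simp
  then show "ereal (2 * ((v' - v) \<bullet> w) / t) \<le> ereal r"
    using assms(2) by (simp add: divide_le_eq)
qed

section \<open>Painleve-Kuratowski limits along filters\<close>

lemma frequently_filterlimI: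
  assumes "filterlim \<gamma> G F" "\<exists>\<^sub>F s in F. P (\<gamma> s)"
  shows "\<exists>\<^sub>F p in G. P p"
proof -
  have "filtermap \<gamma> F \<le> G"
    using assms(1) by (simp add: filterlim_def)
  moreover have "\<exists>\<^sub>F p in filtermap \<gamma> F. P p"
    using assms(2) by (simp add: frequently_filtermap)
  ultimately show ?thesis
    unfolding frequently_def using filter_leD by blast
qed

lemma eventually_at_right_prod:
  assumes "\<forall>\<^sub>F y in G. Q y" "\<tau> > 0"
  shows "\<forall>\<^sub>F p in at_right (0::real) \<times>\<^sub>F G. 0 < fst p \<and> fst p < \<tau> \<and> Q (snd p)"
  unfolding eventually_prod_filter
proof (intro exI conjI)
  show "\<forall>\<^sub>F t in at_right (0::real). 0 < t \<and> t < \<tau>"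
    unfolding eventually_at_right_field using assms(2) by blast
qed (use assms(1) in auto)

lemma filterlim_at_right_scale:
  fixes \<kappa> :: real
  assumes "\<kappa> > 0"
  shows "filterlim (\<lambda>\<theta>. \<theta> * \<kappa>) (at_right 0) (at_right 0)"
  unfolding filterlim_at
proof
  show "\<forall>\<^sub>F \<theta> in at_right 0. \<theta> * \<kappa> \<in> {0<..} \<and> \<theta> * \<kappa> \<noteq> 0"
    using eventually_at_right_less[of 0] by (rule eventually_mono) (use assms in auto)
  show "((\<lambda>\<theta>. \<theta> * \<kappa>) \<longlongrightarrow> 0) (at_right 0)"
    by (rule tendsto_mult_left_zero[OF tendsto_ident_at])
qed

lemma in_PK_liminfI:
  assumes "\<forall>\<^sub>F p in F. y \<in> C p"
  shows "y \<in> PK_liminf C F"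
  unfolding PK_liminf_def mem_Collect_eq
proof (intro allI impI)
  fix e :: real assume "e > 0"
  show "\<forall>\<^sub>F p in F. \<exists>z\<in>C p. dist z y < e"
    by (rule eventually_mono[OF assms]) (use \<open>e > 0\<close> in \<open>auto intro!: bexI[of _ y]\<close>)
qed

lemma in_PK_limsupI:
  assumes "\<exists>\<^sub>F p in F. y \<in> C p"
  shows "y \<in> PK_limsup C F"
  unfolding PK_limsup_def mem_Collect_eq
proof (intro allI impI)
  fix e :: real assume "e > 0"
  show "\<exists>\<^sub>F p in F. \<exists>z\<in>C p. dist z y < e"
    by (rule frequently_elim1[OF assms]) (use \<open>e > 0\<close> in \<open>auto intro!: bexI[of _ y]\<close>)
qed

lemma not_in_PK_liminfI:
  assumes "open U" "y \<in> U" "\<exists>\<^sub>F p in F. C p \<inter> U = {}"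
  shows "y \<notin> PK_liminf C F"
proof
  obtain e where e: "e > 0" "ball y e \<subseteq> U"
    using assms(1,2) open_contains_ball by blast
  then have U: "z \<in> U" if "dist z y < e" for z
    using that by (auto simp: dist_commute)
  assume "y \<in> PK_liminf C F"
  then have "\<forall>\<^sub>F p in F. \<exists>z\<in>C p. dist z y < e"
    using e(1) unfolding PK_liminf_def by blast
  then have "\<forall>\<^sub>F p in F. C p \<inter> U \<noteq> {}"
    by (rule eventually_mono) (auto dest: U)
  then show False
    using assms(3) by (simp add: frequently_def)
qed

lemma not_in_PK_limsupI:
  assumes "open U" "y \<in> U" "\<forall>\<^sub>F p in F. C p \<inter> U = {}"
  shows "y \<notin> PK_limsup C F"
proof
  obtain e where e: "e > 0" "ball y e \<subseteq> U"
    using assms(1,2) open_contains_ball by blast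
  then have U: "z \<in> U" if "dist z y < e" for z
    using that by (auto simp: dist_commute)
  assume "y \<in> PK_limsup C F"
  then have "\<exists>\<^sub>F p in F. \<exists>z\<in>C p. dist z y < e"
    using e(1) unfolding PK_limsup_def by blast
  then have "\<exists>\<^sub>F p in F. C p \<inter> U \<noteq> {}"
    by (rule frequently_elim1) (auto dest: U)
  then show False
    using assms(3) by (simp add: frequently_def)
qed

lemma PK_liminf_subset_PK_limsup: "F \<noteq> bot \<Longrightarrow> PK_liminf C F \<subseteq> PK_limsup C F"
  unfolding PK_liminf_def PK_limsup_def using eventually_frequently by blast

lemma PK_limsup_epi_nonneg:
  assumes "\<forall>\<^sub>F p in F. \<forall>w. 0 \<le> \<Phi> p w" "(w, r) \<in> PK_limsup (\<lambda>p. epi (\<Phi> p)) F"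
  shows "0 \<le> r"
proof (rule ccontr)
  assume r: "\<not> 0 \<le> r"
  have "\<forall>\<^sub>F p in F. epi (\<Phi> p) \<inter> (UNIV \<times> {..<0}) = {}"
  proof (rule eventually_mono[OF assms(1)])
    fix p assume p: "\<forall>w. 0 \<le> \<Phi> p w"
    have "(w', r') \<notin> epi (\<Phi> p) \<inter> (UNIV \<times> {..<0})" for w' r'
    proof
      assume "(w', r') \<in> epi (\<Phi> p) \<inter> (UNIV \<times> {..<0})"
      then have "\<Phi> p w' \<le> ereal r'" "r' < 0"
        by (auto simp: epi_def)
      then show False
        using order.trans[OF p[rule_format, of w']] by fastforce
    qed
    then show "epi (\<Phi> p) \<inter> (UNIV \<times> {..<0}) = {}"
      by fast
  qed
  moreover have "open (UNIV \<times> {..<0::real})"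
    by (intro open_Times) auto
  ultimately have "(w, r) \<notin> PK_limsup (\<lambda>p. epi (\<Phi> p)) F"
    using r by (intro not_in_PK_limsupI) auto
  then show False
    using assms(2) by blast
qed

lemma not_in_PK_limsup_epi_steep:
  fixes \<Phi> :: "real \<times> 'b \<Rightarrow> 'a::real_inner \<Rightarrow> ereal"
  assumes small_t: "\<And>\<tau>. \<tau> > 0 \<Longrightarrow> \<forall>\<^sub>F p in F. 0 < fst p \<and> fst p < \<tau>"
    and "0 < d \<bullet> w" and bound: "\<forall>\<^sub>F p in F. \<forall>w'. ereal (d \<bullet> w' / fst p) \<le> \<Phi> p w'"
  shows "(w, r) \<notin> PK_limsup (\<lambda>p. epi (\<Phi> p)) F"
proof -
  define R where "R = \<bar>r\<bar> + 1"
  define U :: "('a \<times> real) set" where "U = {q. d \<bullet> w / 2 < d \<bullet> fst q \<and> snd q < R}"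
  have R_pos: "R > 0"
    by (simp add: R_def)
  have "\<forall>\<^sub>F p in F. epi (\<Phi> p) \<inter> U = {}"
  proof (rule eventually_mono[OF eventually_conj[OF bound small_t]])
    show "d \<bullet> w / (2 * R) > 0"
      using assms(2) R_pos by simp
    fix p assume p: "(\<forall>w'. ereal (d \<bullet> w' / fst p) \<le> \<Phi> p w') \<and> 0 < fst p \<and> fst p < d \<bullet> w / (2 * R)"
    have "(w', r') \<notin> epi (\<Phi> p) \<inter> U" for w' r'
    proof
      assume "(w', r') \<in> epi (\<Phi> p) \<inter> U"
      then have "\<Phi> p w' \<le> ereal r'" "d \<bullet> w / 2 < d \<bullet> w'" "r' < R"
        by (auto simp: epi_def U_def)
      then have "ereal (d \<bullet> w' / fst p) \<le> ereal r'"
        using order.trans[OF p[THEN conjunct1, rule_format, of w']] by blast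
      then have "d \<bullet> w' \<le> r' * fst p" "r' * fst p < R * fst p"
        using p \<open>r' < R\<close> by (simp_all add: divide_le_eq)
      moreover have "R * fst p * 2 < d \<bullet> w"
        using p R_pos by (simp add: less_divide_eq algebra_simps)
      ultimately show False
        using \<open>d \<bullet> w / 2 < d \<bullet> w'\<close> by linarith
    qed
    then show "epi (\<Phi> p) \<inter> U = {}"
      by fast
  qed
  moreover have "open U"
    unfolding U_def by (intro open_Collect_conj open_Collect_less continuous_intros)
  ultimately show ?thesis
    using assms(2) by (intro not_in_PK_limsupI) (auto simp: U_def R_def)
qed

lemma epi_converges_to_indicatorI:
  fixes \<Phi> :: "real \<times> 'b \<Rightarrow> 'a::real_inner \<Rightarrow> ereal"
  assumes "G \<noteq> bot"
    and nonneg: "\<forall>\<^sub>F p in at_right 0 \<times>\<^sub>F G. \<forall>w. 0 \<le> \<Phi> p w"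
    and flat: "\<And>w. w \<in> S \<Longrightarrow> \<forall>\<^sub>F p in at_right 0 \<times>\<^sub>F G. \<Phi> p w \<le> 0"
    and steep: "\<And>w. w \<notin> S \<Longrightarrow> \<exists>d. 0 < d \<bullet> w \<and>
                  (\<forall>\<^sub>F p in at_right 0 \<times>\<^sub>F G. \<forall>w'. ereal (d \<bullet> w' / fst p) \<le> \<Phi> p w')"
  shows "epi_converges \<Phi> (at_right 0 \<times>\<^sub>F G) (\<lambda>w. if w \<in> S then 0 else \<infinity>)"
proof -
  define F where "F = at_right (0::real) \<times>\<^sub>F G"
  have small_t: "\<forall>\<^sub>F p in F. 0 < fst p \<and> fst p < \<tau>" if "\<tau> > 0" for \<tau>
    using eventually_at_right_prod[OF eventually_True that] unfolding F_def by simp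
  have inner: "S \<times> {0::real..} \<subseteq> PK_liminf (\<lambda>p. epi (\<Phi> p)) F"
  proof
    fix q :: "'a \<times> real" assume "q \<in> S \<times> {0..}"
    then obtain w r where q: "q = (w, r)" "w \<in> S" "r \<in> {0..}"
      by blast
    have "\<forall>\<^sub>F p in F. q \<in> epi (\<Phi> p)"
    proof (rule eventually_mono[OF flat[OF q(2), folded F_def]])
      fix p assume "\<Phi> p w \<le> 0"
      also have "(0::ereal) \<le> ereal r"
        using q(3) by simp
      finally show "q \<in> epi (\<Phi> p)"
        by (simp add: q(1) epi_def)
    qed
    then show "q \<in> PK_liminf (\<lambda>p. epi (\<Phi> p)) F"
      unfolding q(1) by (rule in_PK_liminfI)
  qed
  have outer: "PK_limsup (\<lambda>p. epi (\<Phi> p)) F \<subseteq> S \<times> {0..}"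
  proof
    fix q assume "q \<in> PK_limsup (\<lambda>p. epi (\<Phi> p)) F"
    moreover obtain w r where "q = (w, r)"
      by fastforce
    ultimately have q: "(w, r) \<in> PK_limsup (\<lambda>p. epi (\<Phi> p)) F"
      by simp
    have "w \<in> S"
    proof (rule ccontr)
      assume "w \<notin> S"
      then obtain d where "0 < d \<bullet> w" "\<forall>\<^sub>F p in F. \<forall>w'. ereal (d \<bullet> w' / fst p) \<le> \<Phi> p w'"
        using steep unfolding F_def by blast
      then show False
        using not_in_PK_limsup_epi_steep[OF small_t] q by blast
    qed
    moreover have "0 \<le> r"
      by (rule PK_limsup_epi_nonneg[OF nonneg[folded F_def] q])
    ultimately show "q \<in> S \<times> {0..}"
      by (simp add: \<open>q = (w, r)\<close>)
  qed
  have "F \<noteq> bot"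
    using assms(1) by (simp add: F_def prod_filter_eq_bot)
  moreover have "epi (\<lambda>w. if w \<in> S then 0 else \<infinity>) = S \<times> {0..}"
    by (auto simp: epi_def split: if_splits)
  ultimately show ?thesis
    unfolding epi_converges_def PK_converges_def F_def[symmetric]
    using inner outer PK_liminf_subset_PK_limsup by blast
qed

section \<open>Second-order quotients along the attentive filter\<close>

lemma eventually_attentive_filter_gph:
  assumes "open U" "(xb, vb) \<in> U"
  shows "\<forall>\<^sub>F p in attentive_filter f xb vb. p \<in> U \<inter> gph_subdiff f"
proof -
  have "\<forall>\<^sub>F p in inf (nhds (xb, vb)) (principal (gph_subdiff f)). p \<in> U \<inter> gph_subdiff f"
    unfolding eventually_inf_principal
    by (rule eventually_mono[OF eventually_nhds_in_open[OF assms]]) simp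
  then show ?thesis
    unfolding attentive_filter_def by (rule filter_leD[rotated]) (rule inf_le1)
qed

lemma filterlim_attentive_filterI:
  assumes "(\<phi> \<longlongrightarrow> (xb, vb)) F" "\<forall>\<^sub>F s in F. \<phi> s \<in> gph_subdiff f"
    and "((\<lambda>s. f (fst (\<phi> s))) \<longlongrightarrow> f xb) F"
  shows "filterlim \<phi> (attentive_filter f xb vb) F"
  unfolding attentive_filter_def filterlim_inf filterlim_principal filterlim_filtercomap_iff
  using assms by (simp add: o_def case_prod_unfold)

lemma attentive_filter_neq_bot:
  assumes "(xb, vb) \<in> gph_subdiff f"
  shows "attentive_filter f xb vb \<noteq> bot"
proof
  assume bot: "attentive_filter f xb vb = bot"
  have "filterlim (\<lambda>_::real. (xb, vb)) (attentive_filter f xb vb) (at_right 0)"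
    using assms by (intro filterlim_attentive_filterI) auto
  then show False
    unfolding bot filterlim_def by (simp add: bot_unique filtermap_bot_iff)
qed

lemma eventually_attentive_filter_near:
  assumes "dist (z, l) (xb, vb) < \<rho>" "\<tau> > 0"
  shows "\<forall>\<^sub>F p in at_right (0::real) \<times>\<^sub>F attentive_filter f z l. 0 < fst p \<and> fst p < \<tau> \<and>
           snd (snd p) \<in> subdiff f (fst (snd p)) \<and> dist (snd p) (xb, vb) < \<rho>"
proof -
  have "\<forall>\<^sub>F y in attentive_filter f z l. y \<in> ball (xb, vb) \<rho> \<inter> gph_subdiff f"
    using assms(1) by (intro eventually_attentive_filter_gph) (auto simp: dist_commute)
  from eventually_at_right_prod[OF this assms(2)] show ?thesis
    by (rule eventually_mono) (simp add: gph_subdiff_def case_prod_beta dist_commute)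
qed

lemma second_dq_eventually_nonneg:
  "\<forall>\<^sub>F p in at_right (0::real) \<times>\<^sub>F attentive_filter f z l.
     \<forall>w. 0 \<le> (case p of (t, x, v) \<Rightarrow> second_dq f x v t) w"
proof -
  have near: "\<forall>\<^sub>F p in at_right (0::real) \<times>\<^sub>F attentive_filter f z l. 0 < fst p \<and> fst p < 1 \<and>
                snd (snd p) \<in> subdiff f (fst (snd p)) \<and> dist (snd p) (z, l) < 1"
    by (rule eventually_attentive_filter_near) simp_all
  show ?thesis
  proof (rule eventually_mono[OF near])
    fix p :: "real \<times> 'a \<times> 'a"
    obtain t x v where p: "p = (t, x, v)"
      by (cases p rule: prod_cases3)
    assume "0 < fst p \<and> fst p < 1 \<and> snd (snd p) \<in> subdiff f (fst (snd p)) \<and> dist (snd p) (z, l) < 1"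
    then have "v \<in> subdiff f x" "0 < t"
      by (simp_all add: p)
    then show "\<forall>w. 0 \<le> (case p of (t, x, v) \<Rightarrow> second_dq f x v t) w"
      using second_dq_ge_subgradient[of v f x t v] by (simp add: p zero_ereal_def)
  qed
qed

lemma filterlim_attentive_filter_segment:
  assumes "lb \<in> subdiff f x0" "c \<in> subdiff f x0"
  shows "filterlim (\<lambda>\<theta>. (x0, lb - \<theta> *\<^sub>R (lb - c))) (attentive_filter f x0 lb) (at_right 0)"
proof (rule filterlim_attentive_filterI)
  have "lb - \<theta> *\<^sub>R (lb - c) \<in> subdiff f x0" if "0 \<le> \<theta>" "\<theta> \<le> 1" for \<theta>
  proof -
    have "(1 - \<theta>) *\<^sub>R lb + \<theta> *\<^sub>R c \<in> subdiff f x0"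
      using convex_subdiff[of f x0] assms that unfolding convex_alt by blast
    then show ?thesis
      by (simp add: algebra_simps)
  qed
  moreover have "\<forall>\<^sub>F \<theta> in at_right (0::real). 0 < \<theta> \<and> \<theta> < 1"
    unfolding eventually_at_right_field by (intro exI[of _ 1]) auto
  ultimately show "\<forall>\<^sub>F \<theta> in at_right 0. (x0, lb - \<theta> *\<^sub>R (lb - c)) \<in> gph_subdiff f"
    by (auto elim!: eventually_mono simp: gph_subdiff_def)
  have "((\<lambda>\<theta>. lb - \<theta> *\<^sub>R (lb - c)) \<longlongrightarrow> lb - 0 *\<^sub>R (lb - c)) (at_right 0)"
    by (intro tendsto_intros tendsto_ident_at)
  then show "((\<lambda>\<theta>. (x0, lb - \<theta> *\<^sub>R (lb - c))) \<longlongrightarrow> (x0, lb)) (at_right 0)"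
    by (intro tendsto_Pair) auto
qed simp

lemma second_dq_segment_gt_one:
  assumes "lb \<in> subdiff f x0" "0 < \<theta>" "0 < \<kappa>" "\<kappa> < 2 * (d \<bullet> w)"
  shows "1 < second_dq f x0 (lb - \<theta> *\<^sub>R d) (\<theta> * \<kappa>) w"
proof -
  have "ereal 1 < ereal (2 * (d \<bullet> w) / \<kappa>)"
    using assms(3,4) by (simp add: less_divide_eq)
  also have "\<dots> = ereal (2 * ((lb - (lb - \<theta> *\<^sub>R d)) \<bullet> w) / (\<theta> * \<kappa>))"
    using assms(2) by simp
  also have "\<dots> \<le> second_dq f x0 (lb - \<theta> *\<^sub>R d) (\<theta> * \<kappa>) w"
    using assms(1-3) by (intro second_dq_ge_subgradient) simp_all
  finally show ?thesis
    by (simp add: one_ereal_def)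
qed

lemma not_in_PK_liminf_second_dq:
  assumes "lb \<in> subdiff f x0" "c \<in> subdiff f x0" "0 < (lb - c) \<bullet> u"
  shows "(u, 0) \<notin> PK_liminf (\<lambda>p. epi ((\<lambda>(t, x, v). second_dq f x v t) p))
                         (at_right 0 \<times>\<^sub>F attentive_filter f x0 lb)"
proof -
  define \<kappa> where "\<kappa> = (lb - c) \<bullet> u"
  define U :: "('a \<times> real) set" where "U = {q. \<kappa> < 2 * ((lb - c) \<bullet> fst q) \<and> snd q < 1}"
  have "\<kappa> > 0"
    using assms(3) by (simp add: \<kappa>_def)
  (* along (\<theta> \<kappa>, x0, lb - \<theta> (lb - c)) the subgradient lb pushes the quotients above 1 near u *)
  have "\<exists>\<^sub>F p in at_right 0 \<times>\<^sub>F attentive_filter f x0 lb.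
      epi ((\<lambda>(t, x, v). second_dq f x v t) p) \<inter> U = {}"
  proof (rule frequently_filterlimI)
    show "filterlim (\<lambda>\<theta>. (\<theta> * \<kappa>, x0, lb - \<theta> *\<^sub>R (lb - c)))
        (at_right 0 \<times>\<^sub>F attentive_filter f x0 lb) (at_right 0)"
      by (rule filterlim_Pair[OF filterlim_at_right_scale[OF \<open>\<kappa> > 0\<close>]
            filterlim_attentive_filter_segment[OF assms(1,2)]])
    have "\<forall>\<^sub>F \<theta> in at_right 0.
        epi ((\<lambda>(t, x, v). second_dq f x v t) (\<theta> * \<kappa>, x0, lb - \<theta> *\<^sub>R (lb - c))) \<inter> U = {}"
      using eventually_at_right_less[of 0]
    proof (rule eventually_mono)
      fix \<theta> :: real assume "0 < \<theta>"
      have "(w, r) \<notin> epi (second_dq f x0 (lb - \<theta> *\<^sub>R (lb - c)) (\<theta> * \<kappa>)) \<inter> U" for w r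
      proof
        assume "(w, r) \<in> epi (second_dq f x0 (lb - \<theta> *\<^sub>R (lb - c)) (\<theta> * \<kappa>)) \<inter> U"
        then have "second_dq f x0 (lb - \<theta> *\<^sub>R (lb - c)) (\<theta> * \<kappa>) w \<le> ereal r"
          and "\<kappa> < 2 * ((lb - c) \<bullet> w)" "r < 1"
          by (auto simp: U_def epi_def)
        then have "1 < ereal r"
          using second_dq_segment_gt_one[OF assms(1) \<open>0 < \<theta>\<close> \<open>\<kappa> > 0\<close>] by (meson less_le_trans)
        then show False
          using \<open>r < 1\<close> by (simp add: one_ereal_def)
      qed
      then show "epi ((\<lambda>(t, x, v). second_dq f x v t) (\<theta> * \<kappa>, x0, lb - \<theta> *\<^sub>R (lb - c))) \<inter> U = {}"
        by auto
    qed
    then show "\<exists>\<^sub>F \<theta> in at_right 0.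
        epi ((\<lambda>(t, x, v). second_dq f x v t) (\<theta> * \<kappa>, x0, lb - \<theta> *\<^sub>R (lb - c))) \<inter> U = {}"
      by (rule eventually_frequently[rotated]) simp
  qed
  moreover have "open U"
    unfolding U_def by (intro open_Collect_conj open_Collect_less continuous_intros)
  ultimately show ?thesis
    using \<open>\<kappa> > 0\<close> by (intro not_in_PK_liminfI) (auto simp: U_def \<kappa>_def)
qed

section \<open>Polyhedral functions as maxima of affine functions\<close>

lemma ereal_eqI_le_ereal:
  fixes x y :: ereal
  assumes "\<And>r. x \<le> ereal r \<longleftrightarrow> y \<le> ereal r"
  shows "x = y"
  using assms by (metis antisym ereal_le_real)

definition max_affine :: "('a::real_inner \<times> real) set \<Rightarrow> ('a \<times> real) set \<Rightarrow> 'a \<Rightarrow> ereal" where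
  "max_affine I J x = (if \<forall>(a, b)\<in>J. a \<bullet> x \<le> b then ereal (MAX (p, c)\<in>I. p \<bullet> x + c) else \<infinity>)"

definition active_pieces :: "('a::real_inner \<times> real) set \<Rightarrow> 'a \<Rightarrow> real \<Rightarrow> 'a set" where
  "active_pieces I x0 g0 = {p. \<exists>c. (p, c) \<in> I \<and> p \<bullet> x0 + c = g0}"

definition active_constraints :: "('a::real_inner \<times> real) set \<Rightarrow> 'a \<Rightarrow> 'a set" where
  "active_constraints J x0 = {a. (a, a \<bullet> x0) \<in> J}"

lemma max_affine_le_ereal_iff:
  assumes "finite I" "I \<noteq> {}"
  shows "max_affine I J x \<le> ereal r \<longleftrightarrow> (\<forall>(a, b)\<in>J. a \<bullet> x \<le> b) \<and> (\<forall>(p, c)\<in>I. p \<bullet> x + c \<le> r)"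
proof (cases "\<forall>(a, b)\<in>J. a \<bullet> x \<le> b")
  case True
  then show ?thesis
    using assms by (simp add: max_affine_def case_prod_beta)
qed (auto simp: max_affine_def)

lemma polyhedron_halfspaces:
  assumes "polyhedron S"
  obtains K where "finite K" "S = {x. \<forall>(a, b)\<in>K. a \<bullet> x \<le> b}"
proof -
  obtain F where F: "finite F" "S = \<Inter>F" "\<forall>h\<in>F. \<exists>a b. a \<noteq> 0 \<and> h = {x. a \<bullet> x \<le> b}"
    using assms unfolding polyhedron_def by blast
  then obtain a b where ab: "\<forall>h\<in>F. h = {x. a h \<bullet> x \<le> b h}"
    by metis
  show ?thesis
  proof
    show "finite ((\<lambda>h. (a h, b h)) ` F)"
      using F(1) by simp
    show "S = {x. \<forall>(a, b)\<in>(\<lambda>h. (a h, b h)) ` F. a \<bullet> x \<le> b}"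
      using F(2) ab by auto
  qed
qed

lemma halfspace_epigraph_slope_nonpos:
  assumes le_iff: "\<And>x r. g x \<le> ereal r \<longleftrightarrow> (\<forall>k\<in>K. \<alpha> k \<bullet> x + \<beta> k * r \<le> b k)"
    and x0: "g x0 = ereal r0" and "k \<in> K"
  shows "\<beta> k \<le> 0"
proof (rule ccontr)
  assume "\<not> \<beta> k \<le> 0"
  define r where "r = max r0 ((b k - \<alpha> k \<bullet> x0) / \<beta> k + 1)"
  have "g x0 \<le> ereal r"
    using x0 by (simp add: r_def)
  then have "\<alpha> k \<bullet> x0 + \<beta> k * r \<le> b k"
    using le_iff \<open>k \<in> K\<close> by blast
  then have "r \<le> (b k - \<alpha> k \<bullet> x0) / \<beta> k"
    using \<open>\<not> \<beta> k \<le> 0\<close> by (simp add: pos_le_divide_eq algebra_simps)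
  then show False
    by (simp add: r_def)
qed

lemma max_affine_of_halfspace_epigraph:
  fixes g :: "'a::real_inner \<Rightarrow> ereal"
  assumes "finite K" and le_iff: "\<And>x r. g x \<le> ereal r \<longleftrightarrow> (\<forall>k\<in>K. \<alpha> k \<bullet> x + \<beta> k * r \<le> b k)"
    and x0: "g x0 = ereal r0"
  obtains I J where "finite I" "I \<noteq> {}" "finite J" "g = max_affine I J"
proof -
  define K0 where "K0 = {k \<in> K. \<beta> k = 0}"
  define K1 where "K1 = {k \<in> K. \<beta> k < 0}"
  define I where "I = (\<lambda>k. ((- 1 / \<beta> k) *\<^sub>R \<alpha> k, b k / \<beta> k)) ` K1"
  define J where "J = (\<lambda>k. (\<alpha> k, b k)) ` K0"
  have K_split: "K = K0 \<union> K1"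
    using halfspace_epigraph_slope_nonpos[OF le_iff x0] by (force simp: K0_def K1_def)
  have piece_iff: "\<alpha> k \<bullet> x + \<beta> k * r \<le> b k \<longleftrightarrow> (- 1 / \<beta> k) *\<^sub>R \<alpha> k \<bullet> x + b k / \<beta> k \<le> r"
    if "k \<in> K1" for k x r
  proof -
    have "- \<beta> k > 0"
      using that by (simp add: K1_def)
    then show ?thesis
      by (simp add: pos_le_divide_eq[symmetric] divide_simps algebra_simps)
  qed
  have le_max_affine_iff:
    "g x \<le> ereal r \<longleftrightarrow> (\<forall>(a, c)\<in>J. a \<bullet> x \<le> c) \<and> (\<forall>(p, c)\<in>I. p \<bullet> x + c \<le> r)" for x r
    unfolding le_iff K_split ball_Un I_def J_def using piece_iff by (simp add: K0_def)
  have "I \<noteq> {}"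
  proof
    assume "I = {}"
    then have "g x0 \<le> ereal (r0 - 1)"
      using le_max_affine_iff[of x0 r0] le_max_affine_iff[of x0 "r0 - 1"] x0 by simp
    then show False
      using x0 by simp
  qed
  moreover have "finite I" "finite J"
    using assms(1) by (simp_all add: I_def J_def K0_def K1_def)
  moreover have "g x = max_affine I J x" for x
    by (rule ereal_eqI_le_ereal)
      (simp only: le_max_affine_iff max_affine_le_ereal_iff[OF \<open>finite I\<close> \<open>I \<noteq> {}\<close>])
  ultimately show ?thesis
    using that by blast
qed

lemma polyhedral_fun_eq_max_affine:
  fixes g :: "'a::euclidean_space \<Rightarrow> ereal"
  assumes "polyhedral_fun g"
  obtains I J where "finite I" "I \<noteq> {}" "finite J" "g = max_affine I J"
proof -
  obtain K :: "(('a \<times> real) \<times> real) set"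
    where K: "finite K" "epi g = {q. \<forall>(a, b)\<in>K. a \<bullet> q \<le> b}"
    using assms polyhedron_halfspaces unfolding polyhedral_fun_def by blast
  have le_iff: "g x \<le> ereal r \<longleftrightarrow> (\<forall>k\<in>K. fst (fst k) \<bullet> x + snd (fst k) * r \<le> snd k)" for x r
  proof -
    have "g x \<le> ereal r \<longleftrightarrow> (x, r) \<in> {q. \<forall>(a, b)\<in>K. a \<bullet> q \<le> b}"
      unfolding K(2)[symmetric] by (simp add: epi_def)
    then show ?thesis
      by (simp add: inner_prod_def case_prod_beta)
  qed
  obtain x0 where "g x0 \<noteq> \<infinity>" "g x0 \<noteq> -\<infinity>"
    using assms unfolding polyhedral_fun_def proper_fun_def by blast
  then obtain r0 where "g x0 = ereal r0"
    by (cases "g x0") auto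
  with K(1) le_iff show ?thesis
    using that by (rule max_affine_of_halfspace_epigraph)
qed

lemma max_affine_ge_piece:
  assumes "finite I" "(p, c) \<in> I"
  shows "ereal (p \<bullet> x + c) \<le> max_affine I J x"
proof -
  have "p \<bullet> x + c \<in> (\<lambda>(p, c). p \<bullet> x + c) ` I"
    using assms(2) by force
  then show ?thesis
    using assms(1) by (auto simp: max_affine_def intro: Max_ge)
qed

lemma max_affine_dom:
  assumes "max_affine I J x \<noteq> \<infinity>" "(a, b) \<in> J"
  shows "a \<bullet> x \<le> b"
  using assms by (auto simp: max_affine_def split: if_splits)

lemma max_affine_active_pieces:
  assumes "finite I" "I \<noteq> {}" "max_affine I J x0 = ereal g0"
  shows "finite (active_pieces I x0 g0)" and "active_pieces I x0 g0 \<noteq> {}"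
proof -
  show "finite (active_pieces I x0 g0)"
    unfolding active_pieces_def by (rule finite_subset[of _ "fst ` I"]) (use assms(1) in force)+
  have "g0 = (MAX (p, c)\<in>I. p \<bullet> x0 + c)"
    using assms(3) by (auto simp: max_affine_def split: if_splits)
  also have "\<dots> \<in> (\<lambda>(p, c). p \<bullet> x0 + c) ` I"
    using assms(1,2) by (intro Max_in) auto
  finally show "active_pieces I x0 g0 \<noteq> {}"
    by (force simp: active_pieces_def)
qed

lemma max_affine_active_piece_subgradient:
  assumes "finite I" "(p, c) \<in> I" "max_affine I J x0 = ereal (p \<bullet> x0 + c)"
  shows "p \<in> subdiff (max_affine I J) x0"
  unfolding subdiff_iff[of "max_affine I J" x0, OF assms(3)]
proof
  fix y
  have "ereal (p \<bullet> x0 + c + p \<bullet> (y - x0)) = ereal (p \<bullet> y + c)"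
    by (simp add: inner_diff_right)
  also have "\<dots> \<le> max_affine I J y"
    by (rule max_affine_ge_piece[OF assms(1,2)])
  finally show "ereal (p \<bullet> x0 + c + p \<bullet> (y - x0)) \<le> max_affine I J y" .
qed

lemma max_affine_active_constraint_subgradient:
  assumes "(a, a \<bullet> x0) \<in> J" "v \<in> subdiff (max_affine I J) x0"
  shows "v + a \<in> subdiff (max_affine I J) x0"
proof -
  obtain f0 where f0: "max_affine I J x0 = ereal f0"
    using assms(2) by (rule subdiff_finite)
  show ?thesis
    unfolding subdiff_iff[of "max_affine I J" x0, OF f0]
  proof
    fix y
    show "ereal (f0 + (v + a) \<bullet> (y - x0)) \<le> max_affine I J y"
    proof (cases "max_affine I J y = \<infinity>")
      case False
      then have "a \<bullet> (y - x0) \<le> 0"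
        using max_affine_dom[OF _ assms(1)] by (simp add: inner_diff_right)
      then have "ereal (f0 + (v + a) \<bullet> (y - x0)) \<le> ereal (f0 + v \<bullet> (y - x0))"
        by (simp add: inner_add_left)
      also have "\<dots> \<le> max_affine I J y"
        using assms(2) subdiff_iff[of "max_affine I J" x0, OF f0] by blast
      finally show ?thesis .
    qed simp
  qed
qed

lemma eventually_nhds_zero_inner_less:
  fixes p :: "'a::real_inner"
  assumes "c < d"
  shows "\<forall>\<^sub>F u in nhds 0. c + p \<bullet> u < d"
proof -
  have "((\<lambda>u. c + p \<bullet> u) \<longlongrightarrow> c + p \<bullet> 0) (nhds 0)"
    by (intro tendsto_intros filterlim_ident)
  then show ?thesis
    using assms by (intro order_tendstoD(2)) auto
qed

lemma active_constraints_near: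
  assumes "\<forall>(a, b)\<in>J. a \<bullet> x0 \<le> b"
    and inactive: "\<And>a b. (a, b) \<in> J \<Longrightarrow> a \<bullet> x0 < b \<Longrightarrow> a \<bullet> (x0 + u) < b"
  shows "(\<forall>(a, b)\<in>J. a \<bullet> (x0 + u) \<le> b) \<longleftrightarrow> (\<forall>a\<in>active_constraints J x0. a \<bullet> u \<le> 0)"
proof
  assume "\<forall>(a, b)\<in>J. a \<bullet> (x0 + u) \<le> b"
  then show "\<forall>a\<in>active_constraints J x0. a \<bullet> u \<le> 0"
    by (auto simp: active_constraints_def inner_add_right)
next
  assume active: "\<forall>a\<in>active_constraints J x0. a \<bullet> u \<le> 0"
  show "\<forall>(a, b)\<in>J. a \<bullet> (x0 + u) \<le> b"
  proof clarify
    fix a b assume ab: "(a, b) \<in> J"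
    show "a \<bullet> (x0 + u) \<le> b"
    proof (cases "a \<bullet> x0 = b")
      case True
      then show ?thesis
        using ab active by (auto simp: active_constraints_def inner_add_right)
    next
      case False
      then show ?thesis
        using assms(1) ab inactive[OF ab] by fastforce
    qed
  qed
qed

lemma active_pieces_near:
  fixes x0 u :: "'a::real_inner"
  assumes "finite I" "\<forall>(p, c)\<in>I. p \<bullet> x0 + c \<le> g0" "active_pieces I x0 g0 \<noteq> {}"
    and inactive: "\<And>p c p'. (p, c) \<in> I \<Longrightarrow> p' \<in> active_pieces I x0 g0 \<Longrightarrow> p \<bullet> x0 + c < g0 \<Longrightarrow>
                     p \<bullet> (x0 + u) + c < g0 + p' \<bullet> u"
  shows "(MAX (p, c)\<in>I. p \<bullet> (x0 + u) + c) = g0 + (MAX p\<in>active_pieces I x0 g0. p \<bullet> u)"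
proof -
  let ?P = "active_pieces I x0 g0"
  have "finite ?P"
    unfolding active_pieces_def by (rule finite_subset[of _ "fst ` I"]) (use assms(1) in force)+
  then have le_max: "p \<bullet> u \<le> (MAX p\<in>?P. p \<bullet> u)" if "p \<in> ?P" for p
    using that by (auto intro: Max_ge)
  have "p \<bullet> (x0 + u) + c \<le> g0 + (MAX p\<in>?P. p \<bullet> u)" if pc: "(p, c) \<in> I" for p c
  proof (cases "p \<bullet> x0 + c = g0")
    case True
    then show ?thesis
      using le_max[of p] pc by (auto simp: active_pieces_def inner_add_right)
  next
    case False
    then have "p \<bullet> x0 + c < g0"
      using assms(2) pc by fastforce
    moreover obtain p' where "p' \<in> ?P"
      using assms(3) by blast
    ultimately show ?thesis
      using inactive[OF pc] le_max[of p'] by fastforce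
  qed
  moreover have "I \<noteq> {}"
    using assms(3) by (auto simp: active_pieces_def)
  ultimately have le: "(MAX (p, c)\<in>I. p \<bullet> (x0 + u) + c) \<le> g0 + (MAX p\<in>?P. p \<bullet> u)"
    using assms(1) by (auto simp: Max_le_iff)
  have "(MAX p\<in>?P. p \<bullet> u) \<in> (\<lambda>p. p \<bullet> u) ` ?P"
    using \<open>finite ?P\<close> assms(3) by (intro Max_in) auto
  then obtain p where p: "p \<in> ?P" "p \<bullet> u = (MAX p\<in>?P. p \<bullet> u)"
    by force
  then obtain c where c: "(p, c) \<in> I" "p \<bullet> x0 + c = g0"
    by (auto simp: active_pieces_def)
  then have "g0 + (MAX p\<in>?P. p \<bullet> u) = p \<bullet> (x0 + u) + c"
    using p(2) by (simp add: inner_add_right)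
  also have "\<dots> \<le> (MAX (p, c)\<in>I. p \<bullet> (x0 + u) + c)"
    using assms(1) c(1) by (auto intro!: Max_ge rev_image_eqI[of "(p, c)"])
  finally show ?thesis
    using le by linarith
qed

lemma max_affine_local_form:
  fixes x0 :: "'a::real_inner"
  assumes I: "finite I" "I \<noteq> {}" and J: "finite J" and x0: "max_affine I J x0 = ereal g0"
  shows "\<exists>\<delta>>0. \<forall>u. norm u < \<delta> \<longrightarrow> max_affine I J (x0 + u) =
           (if \<forall>a\<in>active_constraints J x0. a \<bullet> u \<le> 0
            then ereal (g0 + (MAX p\<in>active_pieces I x0 g0. p \<bullet> u)) else \<infinity>)"
proof -
  define P where "P = active_pieces I x0 g0"
  define A where "A = active_constraints J x0"
  have dom0: "\<forall>(a, b)\<in>J. a \<bullet> x0 \<le> b"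
    using x0 by (auto simp: max_affine_def split: if_splits)
  have below: "\<forall>(p, c)\<in>I. p \<bullet> x0 + c \<le> g0"
    using max_affine_ge_piece[OF I(1), of _ _ x0 J] x0 by auto
  have "finite P" "P \<noteq> {}"
    unfolding P_def by (rule max_affine_active_pieces[OF I x0])+
  have "\<forall>\<^sub>F u in nhds 0. (\<forall>(a, b)\<in>J. a \<bullet> x0 < b \<longrightarrow> a \<bullet> x0 + a \<bullet> u < b) \<and>
          (\<forall>p'\<in>P. \<forall>(p, c)\<in>I. p \<bullet> x0 + c < g0 \<longrightarrow> (p \<bullet> x0 + c) + (p - p') \<bullet> u < g0)"
  proof (intro eventually_conj eventually_ball_finite ballI J I(1) \<open>finite P\<close>)
    fix q assume "q \<in> J"
    show "\<forall>\<^sub>F u in nhds 0. case q of (a, b) \<Rightarrow> a \<bullet> x0 < b \<longrightarrow> a \<bullet> x0 + a \<bullet> u < b"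
      by (cases q) (auto simp: eventually_nhds_zero_inner_less)
  next
    fix p' q assume "p' \<in> P" "q \<in> I"
    show "\<forall>\<^sub>F u in nhds 0. case q of (p, c) \<Rightarrow> p \<bullet> x0 + c < g0 \<longrightarrow> (p \<bullet> x0 + c) + (p - p') \<bullet> u < g0"
      by (cases q) (auto simp: eventually_nhds_zero_inner_less)
  qed
  then obtain \<delta> where "\<delta> > 0" and \<delta>: "\<And>u. norm u < \<delta> \<Longrightarrow>
      (\<forall>(a, b)\<in>J. a \<bullet> x0 < b \<longrightarrow> a \<bullet> x0 + a \<bullet> u < b) \<and>
      (\<forall>p'\<in>P. \<forall>(p, c)\<in>I. p \<bullet> x0 + c < g0 \<longrightarrow> (p \<bullet> x0 + c) + (p - p') \<bullet> u < g0)"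
    unfolding eventually_nhds_metric dist_norm by auto
  have "max_affine I J (x0 + u) = (if \<forall>a\<in>A. a \<bullet> u \<le> 0 then ereal (g0 + (MAX p\<in>P. p \<bullet> u)) else \<infinity>)"
    if u: "norm u < \<delta>" for u
  proof -
    have "(\<forall>(a, b)\<in>J. a \<bullet> (x0 + u) \<le> b) \<longleftrightarrow> (\<forall>a\<in>A. a \<bullet> u \<le> 0)"
      unfolding A_def
      by (rule active_constraints_near[OF dom0]) (use \<delta>[OF u] in \<open>auto simp: inner_add_right\<close>)
    moreover have "(MAX (p, c)\<in>I. p \<bullet> (x0 + u) + c) = g0 + (MAX p\<in>P. p \<bullet> u)"
      unfolding P_def
    proof (rule active_pieces_near[OF I(1) below \<open>P \<noteq> {}\<close>[unfolded P_def]])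
      fix p c p' assume "(p, c) \<in> I" "p' \<in> active_pieces I x0 g0" "p \<bullet> x0 + c < g0"
      then show "p \<bullet> (x0 + u) + c < g0 + p' \<bullet> u"
        using \<delta>[OF u] by (fastforce simp: P_def inner_add_right inner_diff_left)
    qed
    ultimately show ?thesis
      by (simp add: max_affine_def)
  qed
  then show ?thesis
    using \<open>\<delta> > 0\<close> unfolding P_def A_def by blast
qed

section \<open>Relative interiors and normal directions\<close>

lemma separation_closed_convex_cone:
  fixes T :: "'a::euclidean_space set"
  assumes "closed T" "convex_cone T" "d \<notin> T"
  obtains u where "0 < u \<bullet> d" "\<And>x. x \<in> T \<Longrightarrow> u \<bullet> x \<le> 0"
proof -
  have "convex T"
    using assms(2) by (simp add: convex_cone_def)
  then obtain a b where ab: "a \<bullet> d < b" "\<And>x. x \<in> T \<Longrightarrow> b < a \<bullet> x"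
    using separating_hyperplane_closed_point[of T d] assms(1,3) by blast
  have "b < 0"
    using ab(2)[OF convex_cone_contains_0[OF assms(2)]] by simp
  have "0 \<le> a \<bullet> x" if "x \<in> T" for x
  proof (rule ccontr)
    assume "\<not> 0 \<le> a \<bullet> x"
    then have "(b / (a \<bullet> x)) *\<^sub>R x \<in> T"
      using \<open>b < 0\<close> assms(2) that by (simp add: convex_cone_iff divide_nonpos_neg)
    then show False
      using ab(2) \<open>\<not> 0 \<le> a \<bullet> x\<close> by fastforce
  qed
  then show ?thesis
    using ab(1) \<open>b < 0\<close> by (intro that[of "- a"]) auto
qed

lemma normal_vector_off_rel_interior:
  fixes C :: "'a::euclidean_space set"
  assumes "convex C" "z \<in> C" "z \<notin> rel_interior C" "finite G" "\<And>x. x \<in> G \<Longrightarrow> z + x \<in> C"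
  obtains u c where "c \<in> C" "0 < (z - c) \<bullet> u" "\<And>x. x \<in> G \<Longrightarrow> x \<bullet> u \<le> 0"
proof -
  obtain c where c: "c \<in> C" and beyond: "\<And>e. e > 1 \<Longrightarrow> (1 - e) *\<^sub>R c + e *\<^sub>R z \<notin> C"
    using assms(1-3) convex_rel_interior_iff[of C z] by blast
  (* separate z - c from the closed cone generated by G; the possibly non-closed cone
     generated by C - z contains that cone but still misses z - c *)
  define T' where "T' = conic hull ((\<lambda>y. y - z) ` C)"
  have "convex_cone T'"
    unfolding convex_cone_def T'_def using assms(1,2)
    by (auto simp: conic_hull_eq_empty conic_conic_hull
        intro!: convex_conic_hull convex_translation_subtract)
  moreover have "G \<subseteq> T'"
    unfolding T'_def using assms(5) by (force intro: hull_inc)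
  ultimately have G_T': "convex_cone hull G \<subseteq> T'"
    by (rule hull_minimal[rotated])
  have "z - c \<notin> T'"
  proof
    assume "z - c \<in> T'"
    then obtain \<mu> y where \<mu>y: "0 \<le> \<mu>" "y \<in> C" "z - c = \<mu> *\<^sub>R (y - z)"
      unfolding T'_def conic_hull_explicit by auto
    show False
    proof (cases "\<mu> = 0")
      case True
      then show False
        using beyond[of 2] \<mu>y(3) assms(2) by (simp add: scaleR_2)
    next
      case False
      have "(1 - (1 + 1 / \<mu>)) *\<^sub>R c + (1 + 1 / \<mu>) *\<^sub>R z = z + (1 / \<mu>) *\<^sub>R (z - c)"
        by (simp add: algebra_simps)
      also have "\<dots> = y"
        using \<mu>y(3) False by simp
      finally show False
        using beyond[of "1 + 1 / \<mu>"] \<mu>y(1,2) False by simp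
    qed
  qed
  then obtain u where "0 < u \<bullet> (z - c)" "\<And>x. x \<in> convex_cone hull G \<Longrightarrow> u \<bullet> x \<le> 0"
    using separation_closed_convex_cone[OF closed_convex_cone_hull[OF assms(4)]
        convex_cone_convex_cone_hull] G_T' by blast
  then show ?thesis
    using c by (intro that[of c u]) (auto simp: inner_commute intro: hull_inc)
qed

lemma inner_eq_of_max_at_rel_interior:
  fixes C :: "'a::euclidean_space set"
  assumes "convex C" "v \<in> rel_interior C" "c \<in> C" "\<And>c. c \<in> C \<Longrightarrow> c \<bullet> u \<le> v \<bullet> u"
  shows "c \<bullet> u = v \<bullet> u"
proof -
  obtain e where "e > 1" "(1 - e) *\<^sub>R c + e *\<^sub>R v \<in> C"
    using assms(1-3) convex_rel_interior_iff[of C v] by blast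
  then have "((1 - e) *\<^sub>R c + e *\<^sub>R v) \<bullet> u \<le> v \<bullet> u"
    using assms(4) by blast
  then have "(e - 1) * (v \<bullet> u - c \<bullet> u) \<le> 0"
    by (simp add: algebra_simps inner_add_left)
  then have "v \<bullet> u \<le> c \<bullet> u"
    using \<open>e > 1\<close> by (simp add: mult_le_0_iff)
  then show ?thesis
    using assms(3,4) by (simp add: antisym)
qed

lemma add_mem_of_ball_affine_hull:
  fixes C :: "'a::real_normed_vector set"
  assumes "ball z (2 * \<epsilon>) \<inter> affine hull C \<subseteq> C" "z \<in> C" "v \<in> C" "dist v z < \<epsilon>" "c \<in> C"
    and "norm (\<theta> *\<^sub>R (c - z)) < \<epsilon>"
  shows "v + \<theta> *\<^sub>R (c - z) \<in> C"
proof -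
  have "v + \<theta> *\<^sub>R (c - z) \<in> affine hull C"
    using assms(2,3,5) by (intro mem_affine_3_minus affine_affine_hull hull_inc)
  moreover have "dist z (v + \<theta> *\<^sub>R (c - z)) = norm ((v - z) + \<theta> *\<^sub>R (c - z))"
    by (simp add: dist_norm norm_minus_commute algebra_simps)
  then have "dist z (v + \<theta> *\<^sub>R (c - z)) < 2 * \<epsilon>"
    using norm_triangle_ineq[of "v - z" "\<theta> *\<^sub>R (c - z)"] assms(4,6) by (simp add: dist_norm)
  ultimately show ?thesis
    using assms(1) by auto
qed

lemma mem_rel_interior_of_ball_affine_hull:
  fixes C :: "'a::euclidean_space set"
  assumes "ball z (2 * \<epsilon>) \<inter> affine hull C \<subseteq> C" "\<epsilon> > 0" "v \<in> C" "dist v z < \<epsilon>"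
  shows "v \<in> rel_interior C"
proof -
  have "ball v \<epsilon> \<subseteq> ball z (2 * \<epsilon>)"
  proof
    fix y assume "y \<in> ball v \<epsilon>"
    then have "dist z v + dist v y < 2 * \<epsilon>"
      using assms(4) by (simp add: dist_commute)
    then show "y \<in> ball z (2 * \<epsilon>)"
      using dist_triangle[of z y v] by simp
  qed
  then show ?thesis
    unfolding mem_rel_interior_ball using assms(1-3) by blast
qed

lemma not_in_orthogonal_compE:
  fixes w :: "'a::real_inner"
  assumes "w \<notin> orthogonal_comp D" "\<epsilon> > 0"
  obtains d \<theta> where "d \<in> D" "0 < (\<theta> *\<^sub>R d) \<bullet> w" "norm (\<theta> *\<^sub>R d) < \<epsilon>"
proof -
  obtain d where d: "d \<in> D" "d \<bullet> w \<noteq> 0"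
    using assms(1) by (auto simp: orthogonal_comp_def orthogonal_def)
  define \<theta> where "\<theta> = sgn (d \<bullet> w) * \<epsilon> / (2 * (norm d + 1))"
  have "(\<theta> *\<^sub>R d) \<bullet> w = \<epsilon> / (2 * (norm d + 1)) * \<bar>d \<bullet> w\<bar>"
    by (simp add: \<theta>_def abs_sgn)
  also have "\<dots> > 0"
    using d(2) assms(2) by (intro mult_pos_pos divide_pos_pos) (auto intro: add_nonneg_pos)
  finally have pos: "0 < (\<theta> *\<^sub>R d) \<bullet> w" .
  have "norm (\<theta> *\<^sub>R d) = \<epsilon> / 2 * (norm d / (norm d + 1))"
    using d(2) assms(2) by (simp add: \<theta>_def abs_mult)
  also have "\<dots> \<le> \<epsilon> / 2"
    using assms(2) by (intro mult_left_le) (auto simp: divide_le_eq_1 add_nonneg_pos)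
  finally have "norm (\<theta> *\<^sub>R d) < \<epsilon>"
    using assms(2) by linarith
  then show ?thesis
    using d(1) pos that by blast
qed

section \<open>The germ of a polyhedral function\<close>

lemma Max_mult_left:
  fixes f :: "'b \<Rightarrow> real"
  assumes "finite P" "P \<noteq> {}" "c \<ge> 0"
  shows "(MAX p\<in>P. c * f p) = c * (MAX p\<in>P. f p)"
proof -
  have "mono (\<lambda>x. c * x)"
    using assms(3) by (auto intro: monoI mult_left_mono)
  then have "c * (MAX p\<in>P. f p) = Max ((\<lambda>x. c * x) ` f ` P)"
    using assms by (intro mono_Max_commute) auto
  then show ?thesis
    by (simp add: image_image)
qed

locale polyhedral_germ =
  fixes g :: "'a::euclidean_space \<Rightarrow> ereal" and zb :: 'a and g0 :: real
    and P A :: "'a set" and \<delta> :: real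
  assumes finite_P: "finite P" and P_nonempty: "P \<noteq> {}" and finite_A: "finite A"
    and delta_pos: "0 < \<delta>"
    and P_subdiff: "P \<subseteq> subdiff g zb"
    and A_subdiff: "\<And>a v. a \<in> A \<Longrightarrow> v \<in> subdiff g zb \<Longrightarrow> v + a \<in> subdiff g zb"
    and local_form: "\<And>u. norm u < \<delta> \<Longrightarrow>
          g (zb + u) = (if \<forall>a\<in>A. a \<bullet> u \<le> 0 then ereal (g0 + (MAX p\<in>P. p \<bullet> u)) else \<infinity>)"
begin

abbreviation C :: "'a set" where "C \<equiv> subdiff g zb"

lemma value_at_base: "g zb = ereal g0"
  using local_form[of 0] delta_pos P_nonempty by (simp add: image_constant_conv)

lemma subdiff_iff_base: "v \<in> C \<longleftrightarrow> (\<forall>u. ereal (g0 + v \<bullet> u) \<le> g (zb + u))"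
  unfolding subdiff_iff[of g zb, OF value_at_base]
  by (metis add_diff_cancel_left' diff_add_cancel add.commute)

lemma le_linear_near_base:
  assumes "\<forall>a\<in>A. a \<bullet> u \<le> 0" "\<forall>p\<in>P. p \<bullet> u \<le> v \<bullet> u" "norm u < \<delta>"
  shows "g (zb + u) \<le> ereal (g0 + v \<bullet> u)"
  using local_form[OF assms(3)] assms(1,2) finite_P P_nonempty by simp

lemma subdiff_near_base:
  assumes v: "v \<in> subdiff g (zb + u)" and u: "norm u < \<delta> / 2"
  shows "v \<in> C" "g (zb + u) = ereal (g0 + v \<bullet> u)"
proof -
  obtain gu where gu: "g (zb + u) = ereal gu"
    using v by (rule subdiff_finite)
  have sub: "ereal (gu + v \<bullet> (y - (zb + u))) \<le> g y" for y
    using v subdiff_iff[of g "zb + u", OF gu] by blast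
  define M where "M = (MAX p\<in>P. p \<bullet> u)"
  have "norm u < \<delta>" "norm (2 *\<^sub>R u) < \<delta>"
    using u delta_pos by simp_all
  moreover have "\<forall>a\<in>A. a \<bullet> u \<le> 0"
    using local_form[OF \<open>norm u < \<delta>\<close>] gu by (auto split: if_splits)
  ultimately have gu_M: "gu = g0 + M" and g2u: "g (zb + 2 *\<^sub>R u) = ereal (g0 + 2 * M)"
    using local_form gu finite_P P_nonempty by (simp_all add: M_def Max_mult_left)
  (* the germ is positively homogeneous, so the subgradient inequality at zb + 2u and at zb
     pins down v \<bullet> u *)
  have "gu + v \<bullet> u \<le> g0 + 2 * M"
    using sub[of "zb + 2 *\<^sub>R u"] g2u by (simp add: algebra_simps scaleR_2)
  moreover have "gu - v \<bullet> u \<le> g0"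
    using sub[of zb] value_at_base by simp
  ultimately have gu_eq: "gu = g0 + v \<bullet> u"
    using gu_M by linarith
  then show "g (zb + u) = ereal (g0 + v \<bullet> u)"
    using gu by simp
  show "v \<in> C"
    unfolding subdiff_iff_base
  proof
    fix y
    show "ereal (g0 + v \<bullet> y) \<le> g (zb + y)"
      using sub[of "zb + y"] gu_eq by (simp add: inner_diff_right)
  qed
qed

lemma value_on_orthogonal_comp:
  assumes "lb \<in> C" "s \<in> orthogonal_comp ((\<lambda>c. c - lb) ` C)" "norm s < \<delta>"
  shows "g (zb + s) = ereal (g0 + lb \<bullet> s)"
proof (rule antisym)
  have orth: "(c - lb) \<bullet> s = 0" if "c \<in> C" for c
    using assms(2) that by (auto simp: orthogonal_comp_def orthogonal_def)
  have "a \<bullet> s = 0" if "a \<in> A" for a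
    using orth[OF A_subdiff[OF that assms(1)]] by simp
  moreover have "p \<bullet> s = lb \<bullet> s" if "p \<in> P" for p
    using orth[of p] P_subdiff that by (auto simp: inner_diff_left)
  ultimately show "g (zb + s) \<le> ereal (g0 + lb \<bullet> s)"
    using assms(3) by (intro le_linear_near_base) auto
  show "ereal (g0 + lb \<bullet> s) \<le> g (zb + s)"
    using assms(1) subdiff_iff_base by blast
qed

lemma second_dq_nonpos_on_orthogonal_comp:
  assumes "lb \<in> C"
    and x: "x - zb \<in> orthogonal_comp ((\<lambda>c. c - lb) ` C)" "norm (x - zb) < \<delta> / 2"
      "g x = ereal (g0 + lb \<bullet> (x - zb))"
    and "v \<in> C" and w: "w \<in> orthogonal_comp ((\<lambda>c. c - lb) ` C)" and "0 < t" "t * norm w < \<delta> / 2"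
  shows "second_dq g x v t w \<le> 0"
proof -
  have "x - zb + t *\<^sub>R w \<in> orthogonal_comp ((\<lambda>c. c - lb) ` C)"
    using x(1) w subspace_orthogonal_comp by (blast intro: subspace_add subspace_scale)
  moreover have "norm (x - zb + t *\<^sub>R w) < \<delta>"
    using norm_triangle_ineq[of "x - zb" "t *\<^sub>R w"] x(2) assms(7,8) by simp
  ultimately have "g (zb + (x - zb + t *\<^sub>R w)) = ereal (g0 + lb \<bullet> (x - zb + t *\<^sub>R w))"
    by (rule value_on_orthogonal_comp[OF \<open>lb \<in> C\<close>])
  moreover have "v \<bullet> w = lb \<bullet> w"
    using w \<open>v \<in> C\<close> by (auto simp: orthogonal_comp_def orthogonal_def inner_diff_left)
  ultimately have "g (x + t *\<^sub>R w) \<le> ereal (g0 + lb \<bullet> (x - zb) + t * (v \<bullet> w) + 0 * (t\<^sup>2 / 2))"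
    by (simp add: inner_add_right)
  then show ?thesis
    using second_dq_le_iff[of g x, OF x(3) \<open>0 < t\<close>] by (simp add: zero_ereal_def)
qed

context
  fixes lb :: 'a and \<epsilon> :: real
  assumes eps_pos: "0 < \<epsilon>" and lb_mem: "lb \<in> C"
    and ri_ball: "ball lb (2 * \<epsilon>) \<inter> affine hull C \<subseteq> C"
begin

lemma gph_near_rel_interior:
  assumes v: "v \<in> subdiff g x" and near: "dist (x, v) (zb, lb) < min (\<delta> / 2) \<epsilon>"
  shows "x - zb \<in> orthogonal_comp ((\<lambda>c. c - lb) ` C)" "norm (x - zb) < \<delta> / 2"
    and "g x = ereal (g0 + lb \<bullet> (x - zb))" "C \<subseteq> subdiff g x" "v \<in> C" "dist v lb < \<epsilon>"
proof -
  define u where "u = x - zb"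
  have "dist x zb < min (\<delta> / 2) \<epsilon>" "dist v lb < min (\<delta> / 2) \<epsilon>"
    using near dist_fst_le[of "(x, v)" "(zb, lb)"] dist_snd_le[of "(x, v)" "(zb, lb)"] by auto
  then show u_small: "norm (x - zb) < \<delta> / 2" and v_near: "dist v lb < \<epsilon>"
    by (auto simp: dist_norm)
  have x: "x = zb + u"
    by (simp add: u_def)
  have "v \<in> subdiff g (zb + u)" "norm u < \<delta> / 2"
    using v u_small by (simp_all add: x[symmetric] u_def)
  then have vC: "v \<in> C" and gx: "g x = ereal (g0 + v \<bullet> u)"
    unfolding x by (rule subdiff_near_base)+
  show "v \<in> C"
    by (fact vC)
  have "v \<in> rel_interior C"
    by (rule mem_rel_interior_of_ball_affine_hull[OF ri_ball eps_pos vC v_near])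
  moreover have "c \<bullet> u \<le> v \<bullet> u" if "c \<in> C" for c
  proof -
    have "ereal (g0 + c \<bullet> u) \<le> g (zb + u)"
      using that subdiff_iff_base by blast
    then show ?thesis
      using gx by (simp add: x)
  qed
  ultimately have const: "c \<bullet> u = v \<bullet> u" if "c \<in> C" for c
    using inner_eq_of_max_at_rel_interior[OF convex_subdiff] that by blast
  show "x - zb \<in> orthogonal_comp ((\<lambda>c. c - lb) ` C)"
    using const lb_mem by (auto simp: u_def orthogonal_comp_def orthogonal_def inner_diff_left)
  show "g x = ereal (g0 + lb \<bullet> (x - zb))"
    using gx const[OF lb_mem] by (simp add: u_def)
  show "C \<subseteq> subdiff g x"
  proof
    fix c assume "c \<in> C"
    show "c \<in> subdiff g x"
      by (rule mem_subdiff_at_contact_point[OF \<open>c \<in> C\<close> value_at_base])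
        (use gx const[OF \<open>c \<in> C\<close>] in \<open>simp add: u_def\<close>)
  qed
qed

lemma second_dq_eventually_nonpos:
  assumes zl: "dist (z, l) (zb, lb) < min (\<delta> / 2) \<epsilon>"
    and w: "w \<in> orthogonal_comp ((\<lambda>c. c - lb) ` C)"
  shows "\<forall>\<^sub>F p in at_right (0::real) \<times>\<^sub>F attentive_filter g z l.
           (case p of (t, x, v) \<Rightarrow> second_dq g x v t) w \<le> 0"
proof -
  define \<tau> where "\<tau> = \<delta> / (2 * (norm w + 1))"
  have "\<tau> > 0"
    using delta_pos by (simp add: \<tau>_def add_nonneg_pos)
  have "\<tau> * norm w = \<delta> / 2 * (norm w / (norm w + 1))"
    by (simp add: \<tau>_def)
  also have "\<dots> < \<delta> / 2 * 1"
    using delta_pos by (intro mult_strict_left_mono) (auto simp: divide_less_eq_1 add_nonneg_pos)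
  finally have \<tau>_small: "\<tau> * norm w < \<delta> / 2"
    by simp
  show ?thesis
  proof (rule eventually_mono[OF eventually_attentive_filter_near[OF zl \<open>\<tau> > 0\<close>]])
    fix p :: "real \<times> 'a \<times> 'a"
    obtain t x v where p: "p = (t, x, v)"
      by (cases p rule: prod_cases3)
    assume "0 < fst p \<and> fst p < \<tau> \<and> snd (snd p) \<in> subdiff g (fst (snd p)) \<and>
              dist (snd p) (zb, lb) < min (\<delta> / 2) \<epsilon>"
    then have xv: "v \<in> subdiff g x" "dist (x, v) (zb, lb) < min (\<delta> / 2) \<epsilon>" and t: "0 < t" "t < \<tau>"
      by (simp_all add: p)
    have "t * norm w \<le> \<tau> * norm w"
      using t by (intro mult_right_mono) auto
    then have "second_dq g x v t w \<le> 0"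
      using second_dq_nonpos_on_orthogonal_comp[OF lb_mem gph_near_rel_interior(1-3)[OF xv]
          gph_near_rel_interior(5)[OF xv] w t(1)] \<tau>_small
      by linarith
    then show "(case p of (t, x, v) \<Rightarrow> second_dq g x v t) w \<le> 0"
      by (simp add: p)
  qed
qed

lemma second_dq_eventually_steep:
  assumes zl: "dist (z, l) (zb, lb) < min (\<delta> / 2) \<epsilon>"
    and w: "w \<notin> orthogonal_comp ((\<lambda>c. c - lb) ` C)"
  shows "\<exists>d. 0 < d \<bullet> w \<and> (\<forall>\<^sub>F p in at_right (0::real) \<times>\<^sub>F attentive_filter g z l.
           \<forall>w'. ereal (d \<bullet> w' / fst p) \<le> (case p of (t, x, v) \<Rightarrow> second_dq g x v t) w')"
proof -
  obtain d0 \<theta> where d0: "d0 \<in> (\<lambda>c. c - lb) ` C" "0 < (\<theta> *\<^sub>R d0) \<bullet> w" "norm (\<theta> *\<^sub>R d0) < \<epsilon>"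
    by (rule not_in_orthogonal_compE[OF w eps_pos])
  then obtain c where c: "c \<in> C" "d0 = c - lb"
    by blast
  define e where "e = \<theta> *\<^sub>R (c - lb)"
  show ?thesis
  proof (intro exI conjI)
    show "0 < (2 *\<^sub>R e) \<bullet> w"
      using d0(2) c(2) by (simp add: e_def)
    show "\<forall>\<^sub>F p in at_right (0::real) \<times>\<^sub>F attentive_filter g z l.
            \<forall>w'. ereal ((2 *\<^sub>R e) \<bullet> w' / fst p) \<le> (case p of (t, x, v) \<Rightarrow> second_dq g x v t) w'"
    proof (rule eventually_mono[OF eventually_attentive_filter_near[OF zl zero_less_one]])
      fix p :: "real \<times> 'a \<times> 'a"
      obtain t x v where p: "p = (t, x, v)"
        by (cases p rule: prod_cases3)
      assume "0 < fst p \<and> fst p < 1 \<and> snd (snd p) \<in> subdiff g (fst (snd p)) \<and>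
                dist (snd p) (zb, lb) < min (\<delta> / 2) \<epsilon>"
      then have xv: "v \<in> subdiff g x" "dist (x, v) (zb, lb) < min (\<delta> / 2) \<epsilon>" and "0 < t"
        by (simp_all add: p)
      have "v + e \<in> C"
        using add_mem_of_ball_affine_hull[OF ri_ball lb_mem gph_near_rel_interior(5-6)[OF xv] c(1)]
          d0(3) c(2) by (simp add: e_def)
      then have "v + e \<in> subdiff g x"
        using gph_near_rel_interior(4)[OF xv] by blast
      then show "\<forall>w'. ereal ((2 *\<^sub>R e) \<bullet> w' / fst p) \<le> (case p of (t, x, v) \<Rightarrow> second_dq g x v t) w'"
        using second_dq_ge_subgradient[of "v + e" g x t v] \<open>0 < t\<close> by (simp add: p)
    qed
  qed
qed

end

lemma epi_limit_near_rel_interior: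
  assumes "lb \<in> rel_interior C"
  obtains \<rho> where "\<rho> > 0"
    "\<And>z l. l \<in> subdiff g z \<Longrightarrow> dist (z, l) (zb, lb) < \<rho> \<Longrightarrow>
       epi_converges (\<lambda>(t, x, v). second_dq g x v t) (at_right 0 \<times>\<^sub>F attentive_filter g z l)
         (\<lambda>w. if w \<in> orthogonal_comp ((\<lambda>c. c - lb) ` C) then 0 else \<infinity>)"
proof -
  obtain e where "e > 0" "ball lb e \<inter> affine hull C \<subseteq> C"
    using assms mem_rel_interior_ball by blast
  then have \<epsilon>: "e / 2 > 0" "ball lb (2 * (e / 2)) \<inter> affine hull C \<subseteq> C"
    by simp_all
  have "lb \<in> C"
    using assms rel_interior_subset by blast
  show ?thesis
  proof (rule that)
    show "min (\<delta> / 2) (e / 2) > 0"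
      using delta_pos \<open>e > 0\<close> by simp
    fix z l assume "l \<in> subdiff g z" "dist (z, l) (zb, lb) < min (\<delta> / 2) (e / 2)"
    then show "epi_converges (\<lambda>(t, x, v). second_dq g x v t) (at_right 0 \<times>\<^sub>F attentive_filter g z l)
         (\<lambda>w. if w \<in> orthogonal_comp ((\<lambda>c. c - lb) ` C) then 0 else \<infinity>)"
      by (intro epi_converges_to_indicatorI attentive_filter_neq_bot second_dq_eventually_nonneg
          second_dq_eventually_nonpos[OF \<epsilon>(1) \<open>lb \<in> C\<close> \<epsilon>(2)]
          second_dq_eventually_steep[OF \<epsilon>(1) \<open>lb \<in> C\<close> \<epsilon>(2)])
        (auto simp: gph_subdiff_def)
  qed
qed

lemma strictly_twice_epi_diff_near_rel_interior:
  assumes "lb \<in> rel_interior C"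
  shows "\<exists>U. open U \<and> (zb, lb) \<in> U \<and>
           (\<forall>z l. (z, l) \<in> U \<and> l \<in> subdiff g z \<longrightarrow> strictly_twice_epi_diff g z l)"
proof -
  obtain \<rho> where "\<rho> > 0" and lim: "\<And>z l. l \<in> subdiff g z \<Longrightarrow> dist (z, l) (zb, lb) < \<rho> \<Longrightarrow>
      epi_converges (\<lambda>(t, x, v). second_dq g x v t) (at_right 0 \<times>\<^sub>F attentive_filter g z l)
        (\<lambda>w. if w \<in> orthogonal_comp ((\<lambda>c. c - lb) ` C) then 0 else \<infinity>)"
    using epi_limit_near_rel_interior[OF assms] by blast
  then show ?thesis
    unfolding strictly_twice_epi_diff_def
    by (intro exI[of _ "ball (zb, lb) \<rho>"]) (auto simp: dist_commute)
qed

lemma normal_direction_off_rel_interior: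
  assumes "lb \<in> C" "lb \<notin> rel_interior C"
  obtains u c where "c \<in> C" "0 < (lb - c) \<bullet> u" "\<forall>a\<in>A. a \<bullet> u \<le> 0" "\<forall>p\<in>P. p \<bullet> u \<le> lb \<bullet> u"
proof -
  define G where "G = (\<lambda>p. p - lb) ` P \<union> A"
  have "finite G"
    using finite_P finite_A by (simp add: G_def)
  moreover have "lb + x \<in> C" if "x \<in> G" for x
    using that P_subdiff A_subdiff[OF _ assms(1)] by (auto simp: G_def)
  ultimately obtain u c where uc: "c \<in> C" "0 < (lb - c) \<bullet> u" and G_le: "\<And>x. x \<in> G \<Longrightarrow> x \<bullet> u \<le> 0"
    using normal_vector_off_rel_interior[OF convex_subdiff assms] by blast
  show ?thesis
  proof (rule that[OF uc])
    show "\<forall>a\<in>A. a \<bullet> u \<le> 0"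
      using G_le by (simp add: G_def)
    show "\<forall>p\<in>P. p \<bullet> u \<le> lb \<bullet> u"
      using G_le by (force simp: G_def inner_diff_left)
  qed
qed

lemma in_PK_limsup_second_dq:
  assumes "lb \<in> C" "\<forall>a\<in>A. a \<bullet> u \<le> 0" "\<forall>p\<in>P. p \<bullet> u \<le> lb \<bullet> u"
  shows "(u, 0) \<in> PK_limsup (\<lambda>p. epi ((\<lambda>(t, x, v). second_dq g x v t) p))
                       (at_right 0 \<times>\<^sub>F attentive_filter g zb lb)"
proof (rule in_PK_limsupI, rule frequently_filterlimI)
  have "filterlim (\<lambda>\<theta>::real. (zb, lb)) (attentive_filter g zb lb) (at_right 0)"
    using assms(1) by (intro filterlim_attentive_filterI) (auto simp: gph_subdiff_def)
  then show "filterlim (\<lambda>\<theta>. (\<theta>, zb, lb))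
      (at_right 0 \<times>\<^sub>F attentive_filter g zb lb) (at_right (0::real))"
    by (rule filterlim_Pair[OF filterlim_ident])
  define \<tau> where "\<tau> = \<delta> / (norm u + 1)"
  have "\<tau> > 0"
    using delta_pos by (simp add: \<tau>_def add_nonneg_pos)
  have "\<forall>\<^sub>F \<theta> in at_right (0::real). 0 < \<theta> \<and> \<theta> < \<tau>"
    unfolding eventually_at_right_field using \<open>\<tau> > 0\<close> by blast
  then have "\<forall>\<^sub>F \<theta> in at_right 0. (u, 0) \<in> epi ((\<lambda>(t, x, v). second_dq g x v t) (\<theta>, zb, lb))"
  proof (rule eventually_mono)
    fix \<theta> :: real assume \<theta>: "0 < \<theta> \<and> \<theta> < \<tau>"
    have "\<theta> * norm u \<le> \<tau> * norm u"
      using \<theta> by (intro mult_right_mono) auto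
    also have "\<tau> * norm u < \<delta>"
      using delta_pos by (simp add: \<tau>_def divide_less_eq add_nonneg_pos)
    finally have "norm (\<theta> *\<^sub>R u) < \<delta>"
      using \<theta> by simp
    then have "g (zb + \<theta> *\<^sub>R u) \<le> ereal (g0 + \<theta> * (lb \<bullet> u) + 0 * (\<theta>\<^sup>2 / 2))"
      using le_linear_near_base[of "\<theta> *\<^sub>R u" lb] assms(2,3) \<theta>
      by (simp add: mult_nonneg_nonpos mult_left_mono)
    then show "(u, 0) \<in> epi ((\<lambda>(t, x, v). second_dq g x v t) (\<theta>, zb, lb))"
      using second_dq_le_iff[of g zb, OF value_at_base, of \<theta> lb u 0] \<theta> by (simp add: epi_def)
  qed
  then show "\<exists>\<^sub>F \<theta> in at_right 0. (u, 0) \<in> epi ((\<lambda>(t, x, v). second_dq g x v t) (\<theta>, zb, lb))"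
    by (rule eventually_frequently[rotated]) simp
qed

lemma not_strictly_twice_epi_diff_off_rel_interior:
  assumes "lb \<in> C" "lb \<notin> rel_interior C"
  shows "\<not> strictly_twice_epi_diff g zb lb"
proof
  obtain u c where "c \<in> C" "0 < (lb - c) \<bullet> u" "\<forall>a\<in>A. a \<bullet> u \<le> 0" "\<forall>p\<in>P. p \<bullet> u \<le> lb \<bullet> u"
    using normal_direction_off_rel_interior[OF assms] .
  then have "(u, 0) \<in> PK_limsup (\<lambda>p. epi ((\<lambda>(t, x, v). second_dq g x v t) p))
                       (at_right 0 \<times>\<^sub>F attentive_filter g zb lb)"
    and "(u, 0) \<notin> PK_liminf (\<lambda>p. epi ((\<lambda>(t, x, v). second_dq g x v t) p))
                       (at_right 0 \<times>\<^sub>F attentive_filter g zb lb)"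
    using in_PK_limsup_second_dq[OF assms(1)] not_in_PK_liminf_second_dq[OF assms(1)]
    by blast+
  moreover assume "strictly_twice_epi_diff g zb lb"
  ultimately show False
    unfolding strictly_twice_epi_diff_def epi_converges_def PK_converges_def by blast
qed

end

lemma polyhedral_germ_of_polyhedral_fun:
  assumes "polyhedral_fun g" "g zb = ereal g0"
  obtains P A \<delta> where "polyhedral_germ g zb g0 P A \<delta>"
proof -
  obtain I J where IJ: "finite I" "I \<noteq> {}" "finite J" and g: "g = max_affine I J"
    using assms(1) by (rule polyhedral_fun_eq_max_affine)
  have zb: "max_affine I J zb = ereal g0"
    using assms(2) g by simp
  obtain \<delta> where "\<delta> > 0" "\<And>u. norm u < \<delta> \<Longrightarrow> g (zb + u) =
      (if \<forall>a\<in>active_constraints J zb. a \<bullet> u \<le> 0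
       then ereal (g0 + (MAX p\<in>active_pieces I zb g0. p \<bullet> u)) else \<infinity>)"
    using max_affine_local_form[OF IJ zb] g by auto
  moreover have "finite (active_pieces I zb g0)" "active_pieces I zb g0 \<noteq> {}"
    by (rule max_affine_active_pieces[OF IJ(1,2) zb])+
  moreover have "finite (active_constraints J zb)"
    unfolding active_constraints_def
    by (rule finite_subset[of _ "fst ` J"]) (use IJ(3) in force)+
  moreover have "active_pieces I zb g0 \<subseteq> subdiff g zb"
    using max_affine_active_piece_subgradient[OF IJ(1)] zb g by (auto simp: active_pieces_def)
  moreover have "v + a \<in> subdiff g zb" if "a \<in> active_constraints J zb" "v \<in> subdiff g zb" for a v
    using max_affine_active_constraint_subgradient[of a zb J v I] that g
    by (simp add: active_constraints_def)
  ultimately have "polyhedral_germ g zb g0 (active_pieces I zb g0) (active_constraints J zb) \<delta>"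
    by unfold_locales auto
  then show ?thesis
    by (rule that)
qed

theorem theorem4p3:
  fixes g :: "'a::euclidean_space \<Rightarrow> ereal" and zb lb :: 'a
  assumes "polyhedral_fun g"
    and "lb \<in> subdiff g zb"
  shows "(\<exists>U. open U \<and> (zb, lb) \<in> U \<and>
            (\<forall>z l. (z, l) \<in> U \<and> l \<in> subdiff g z \<longrightarrow> strictly_twice_epi_diff g z l))
         \<longleftrightarrow> lb \<in> rel_interior (subdiff g zb)"
proof -
  obtain g0 where "g zb = ereal g0"
    using assms(2) by (rule subdiff_finite)
  then obtain P A \<delta> where "polyhedral_germ g zb g0 P A \<delta>"
    using assms(1) polyhedral_germ_of_polyhedral_fun by blast
  then interpret polyhedral_germ g zb g0 P A \<delta> .
  show ?thesis
  proof
    assume "\<exists>U. open U \<and> (zb, lb) \<in> U \<and>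
              (\<forall>z l. (z, l) \<in> U \<and> l \<in> subdiff g z \<longrightarrow> strictly_twice_epi_diff g z l)"
    then have "strictly_twice_epi_diff g zb lb"
      using assms(2) by blast
    then show "lb \<in> rel_interior C"
      using not_strictly_twice_epi_diff_off_rel_interior assms(2) by blast
  qed (rule strictly_twice_epi_diff_near_rel_interior)
qed

end
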